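(* Let $X$ be a set and let $\mathrm{SGD}\langle X\rangle$ be the subalgebra of the free differential Poisson algebra $\mathrm{PoisDer}\langle X,d\rangle$ generated by $X$ with respect to the operations $[u,v]=\{u,v\}$ and $u\circ v=u\,d(v)$ (this is the free algebra of the variety generated by special GD-algebras). Then $\mathrm{SGD}\langle X\rangle$ coincides with the linear span of all differential Poisson monomials in $X$ (expressions built from elements of $X$ using $d$, the commutative product and the bracket) of weight $-1$.
   Context: A Poisson algebra has an associative commutative product and a Lie bracket $\{\cdot,\cdot\}$ satisfying $\{x,yz\}=\{x,y\}z+y\{x,z\}$; $\mathrm{PoisDer}\langle X,d\rangle$ is the free Poisson algebra generated by $X$ with a derivation $d$ of both operations. The weight of differential Poisson monomials is defined by $\mathrm{wt}(x)=-1$ for $x\in X$, $\mathrm{wt}(d(u))=\mathrm{wt}(u)+1$, $\mathrm{wt}(\{u,v\})=\mathrm{wt}(u)+\mathrm{wt}(v)+1$, $\mathrm{wt}(uv)=\mathrm{wt}(u)+\mathrm{wt}(v)$ (well defined since the Poisson identities are homogeneous for this weight). A GD-algebra is special if it embeds into a differential Poisson algebra with $[u,v]=\{u,v\}$ and $u\circ v=u\,d(v)$. *)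

theory Defs
  imports Main "HOL-Library.Poly_Mapping"
begin

datatype 'x dpmon =
    Gen 'x
  | Der "'x dpmon"
  | Prod "'x dpmon" "'x dpmon"
  | Brk "'x dpmon" "'x dpmon"

fun wt :: "'x dpmon \<Rightarrow> int" where
  "wt (Gen x) = -1"
| "wt (Der u) = wt u + 1"
| "wt (Prod u v) = wt u + wt v"
| "wt (Brk u v) = wt u + wt v + 1"

text \<open>Formal linear combinations of monomials over the field 'k (the free
  differential magma algebra); operations extended (bi)linearly.\<close>
type_synonym ('x, 'k) dpterm = "'x dpmon \<Rightarrow>\<^sub>0 'k"

definition mon :: "'x dpmon \<Rightarrow> ('x, 'k::field) dpterm" where
  "mon u = Poly_Mapping.single u 1"

definition scal :: "'k::field \<Rightarrow> ('x, 'k) dpterm \<Rightarrow> ('x, 'k) dpterm" where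
  "scal c f = Poly_Mapping.map (\<lambda>v. c * v) f"

definition derF :: "('x, 'k::field) dpterm \<Rightarrow> ('x, 'k) dpterm" where
  "derF f = (\<Sum>s\<in>Poly_Mapping.keys f. Poly_Mapping.single (Der s) (Poly_Mapping.lookup f s))"

definition prodF :: "('x, 'k::field) dpterm \<Rightarrow> ('x, 'k) dpterm \<Rightarrow> ('x, 'k) dpterm" where
  "prodF f g = (\<Sum>s\<in>Poly_Mapping.keys f. \<Sum>t\<in>Poly_Mapping.keys g. Poly_Mapping.single (Prod s t) (Poly_Mapping.lookup f s * Poly_Mapping.lookup g t))"

definition brkF :: "('x, 'k::field) dpterm \<Rightarrow> ('x, 'k) dpterm \<Rightarrow> ('x, 'k) dpterm" where
  "brkF f g = (\<Sum>s\<in>Poly_Mapping.keys f. \<Sum>t\<in>Poly_Mapping.keys g. Poly_Mapping.single (Brk s t) (Poly_Mapping.lookup f s * Poly_Mapping.lookup g t))"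

text \<open>PoisDer<X,d> is the quotient of dpterm by this ideal.\<close>
inductive_set dp_ideal :: "('x, 'k::field) dpterm set" where
  assoc: "prodF (prodF a b) c - prodF a (prodF b c) \<in> dp_ideal"
| comm: "prodF a b - prodF b a \<in> dp_ideal"
| alt: "brkF a a \<in> dp_ideal"
| jacobi: "brkF a (brkF b c) + brkF b (brkF c a) + brkF c (brkF a b) \<in> dp_ideal"
| leibniz: "brkF a (prodF b c) - (prodF (brkF a b) c + prodF b (brkF a c)) \<in> dp_ideal"
| der_prod: "derF (prodF a b) - (prodF (derF a) b + prodF a (derF b)) \<in> dp_ideal"
| der_brk: "derF (brkF a b) - (brkF (derF a) b + brkF a (derF b)) \<in> dp_ideal"
| zero: "0 \<in> dp_ideal"
| add: "i \<in> dp_ideal \<Longrightarrow> j \<in> dp_ideal \<Longrightarrow> i + j \<in> dp_ideal"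
| smul: "i \<in> dp_ideal \<Longrightarrow> scal c i \<in> dp_ideal"
| prodL: "i \<in> dp_ideal \<Longrightarrow> prodF a i \<in> dp_ideal"
| prodR: "i \<in> dp_ideal \<Longrightarrow> prodF i a \<in> dp_ideal"
| brkL: "i \<in> dp_ideal \<Longrightarrow> brkF a i \<in> dp_ideal"
| brkR: "i \<in> dp_ideal \<Longrightarrow> brkF i a \<in> dp_ideal"
| der: "i \<in> dp_ideal \<Longrightarrow> derF i \<in> dp_ideal"

inductive_set lspan :: "('x, 'k::field) dpterm set \<Rightarrow> ('x, 'k) dpterm set" for A where
  base: "a \<in> A \<Longrightarrow> a \<in> lspan A"
| zero: "0 \<in> lspan A"
| add: "f \<in> lspan A \<Longrightarrow> g \<in> lspan A \<Longrightarrow> f + g \<in> lspan A"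
| smul: "f \<in> lspan A \<Longrightarrow> scal c f \<in> lspan A"

text \<open>Preimage in dpterm of SGD<X>: the subalgebra generated by the generators with respect
  to [u,v] = {u,v} and u o v = u d(v).\<close>
inductive_set sgd :: "('x, 'k::field) dpterm set" where
  gen: "mon (Gen x) \<in> sgd"
| zero: "0 \<in> sgd"
| add: "f \<in> sgd \<Longrightarrow> g \<in> sgd \<Longrightarrow> f + g \<in> sgd"
| smul: "f \<in> sgd \<Longrightarrow> scal c f \<in> sgd"
| lie: "f \<in> sgd \<Longrightarrow> g \<in> sgd \<Longrightarrow> brkF f g \<in> sgd"
| circ: "f \<in> sgd \<Longrightarrow> g \<in> sgd \<Longrightarrow> prodF f (derF g) \<in> sgd"

text \<open>Image of a set of representatives in PoisDer<X,d>, recorded as its saturation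
  modulo the ideal (two sets have the same image in the quotient iff saturations agree).\<close>
definition mod_ideal :: "('x, 'k::field) dpterm set \<Rightarrow> ('x, 'k) dpterm set" where
  "mod_ideal A = {a + i | a i. a \<in> A \<and> i \<in> dp_ideal}"

end

theory Submission
  imports Defs
begin

text \<open>
  Let \<open>A\<close> be the image of \<open>SGD\<langle>X\<rangle>\<close> in \<open>PoisDer\<langle>X,d\<rangle>\<close>. The operations \<open>[u,v]\<close> and
  \<open>u \<circ> v = u d(v)\<close> both preserve weight \<open>-1\<close>, which gives one inclusion. For the other,
  call \<open>f\<close> of level \<open>n\<close> if \<open>f a\<^sub>1 \<cdots> a\<^sub>n \<in> A\<close> for all \<open>a\<^sub>i \<in> A\<close>. Since \<open>a d(f) \<in> A\<close> for
  \<open>a, f \<in> A\<close>, the Leibniz rules show that \<open>d\<close> raises the level by one, the bracket adds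
  levels and the product of levels \<open>m\<close> and \<open>n\<close> has level \<open>m + n - 1\<close>. Subproducts of a
  monomial may have negative weight, so levels are extended to integer weights closed under
  products; an element of non-negative weight \<open>i\<close> still has level \<open>i\<close>, because a factor of
  negative weight can always be absorbed into a neighbour of non-negative weight. Every
  monomial \<open>u\<close> has weight \<open>wt u + 1\<close>, so monomials with \<open>wt u = -1\<close> lie in \<open>A\<close>.
\<close>

definition bilin :: "('x dpmon \<Rightarrow> 'x dpmon \<Rightarrow> 'x dpmon) \<Rightarrow> ('x, 'k::field) dpterm \<Rightarrow> ('x, 'k) dpterm \<Rightarrow> ('x, 'k) dpterm" where
  "bilin F f g = (\<Sum>s\<in>Poly_Mapping.keys f. \<Sum>t\<in>Poly_Mapping.keys g.
      Poly_Mapping.single (F s t) (Poly_Mapping.lookup f s * Poly_Mapping.lookup g t))"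

lemma prodF_eq_bilin: "prodF = bilin Prod"
  by (intro ext) (simp add: prodF_def bilin_def)

lemma brkF_eq_bilin: "brkF = bilin Brk"
  by (intro ext) (simp add: brkF_def bilin_def)

lemma lookup_scal: "Poly_Mapping.lookup (scal c f) k = c * Poly_Mapping.lookup f k"
  by (simp add: scal_def Poly_Mapping.map.rep_eq when_def)

lemma keys_scal_subset: "Poly_Mapping.keys (scal c f) \<subseteq> Poly_Mapping.keys f"
  by (auto simp: in_keys_iff lookup_scal)

lemma scal_zero [simp]: "scal c 0 = 0"
  by (rule poly_mapping_eqI) (simp add: lookup_scal)

lemma scal_add: "scal c (f + g) = scal c f + scal c g"
  by (rule poly_mapping_eqI) (simp add: lookup_scal lookup_add algebra_simps)

lemma scal_diff: "scal c (f - g) = scal c f - scal c g"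
  by (rule poly_mapping_eqI) (simp add: lookup_scal lookup_minus algebra_simps)

lemma scal_single: "scal c (Poly_Mapping.single k v) = Poly_Mapping.single k (c * v)"
  by (rule poly_mapping_eqI) (simp add: lookup_scal lookup_single when_def)

lemma scal_sum: "scal c (\<Sum>i\<in>A. h i) = (\<Sum>i\<in>A. scal c (h i))"
  by (induction A rule: infinite_finite_induct) (simp_all add: scal_add)

lemma scal_minus_one: "scal (-1) f = - f"
  by (rule poly_mapping_eqI) (simp add: lookup_scal)

lemma sum_keys_superset:
  assumes "finite S" "Poly_Mapping.keys f \<subseteq> S" "\<And>s. H s 0 = 0"
  shows "(\<Sum>s\<in>Poly_Mapping.keys f. H s (Poly_Mapping.lookup f s))
       = (\<Sum>s\<in>S. H s (Poly_Mapping.lookup f s))"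
  by (rule sum.mono_neutral_left) (use assms in \<open>auto simp: in_keys_iff\<close>)

lemma bilin_superset:
  assumes "finite S" "Poly_Mapping.keys f \<subseteq> S" "finite T" "Poly_Mapping.keys g \<subseteq> T"
  shows "bilin F f g = (\<Sum>s\<in>S. \<Sum>t\<in>T.
           Poly_Mapping.single (F s t) (Poly_Mapping.lookup f s * Poly_Mapping.lookup g t))"
proof -
  have "bilin F f g = (\<Sum>s\<in>S. \<Sum>t\<in>Poly_Mapping.keys g.
           Poly_Mapping.single (F s t) (Poly_Mapping.lookup f s * Poly_Mapping.lookup g t))"
    unfolding bilin_def by (rule sum_keys_superset[OF assms(1,2)]) simp
  also have "\<dots> = (\<Sum>s\<in>S. \<Sum>t\<in>T.
           Poly_Mapping.single (F s t) (Poly_Mapping.lookup f s * Poly_Mapping.lookup g t))"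
    by (intro sum.cong refl sum_keys_superset[OF assms(3,4),
          where H="\<lambda>t v. Poly_Mapping.single (F _ t) (_ * v)"]) simp
  finally show ?thesis .
qed

lemma bilin_add_left: "bilin F (f1 + f2) g = bilin F f1 g + bilin F f2 g"
proof -
  let ?S = "Poly_Mapping.keys f1 \<union> Poly_Mapping.keys f2" and ?T = "Poly_Mapping.keys g"
  have "bilin F (f1 + f2) g = (\<Sum>s\<in>?S. \<Sum>t\<in>?T.
          Poly_Mapping.single (F s t) (Poly_Mapping.lookup (f1 + f2) s * Poly_Mapping.lookup g t))"
    by (rule bilin_superset) (use keys_add[of f1 f2] in auto)
  also have "\<dots> = bilin F f1 g + bilin F f2 g"
    by (subst (1 2) bilin_superset[of ?S _ ?T])
      (auto simp: lookup_add distrib_right single_add sum.distrib)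
  finally show ?thesis .
qed

lemma bilin_add_right: "bilin F g (f1 + f2) = bilin F g f1 + bilin F g f2"
proof -
  let ?S = "Poly_Mapping.keys f1 \<union> Poly_Mapping.keys f2" and ?T = "Poly_Mapping.keys g"
  have "bilin F g (f1 + f2) = (\<Sum>t\<in>?T. \<Sum>s\<in>?S.
          Poly_Mapping.single (F t s) (Poly_Mapping.lookup g t * Poly_Mapping.lookup (f1 + f2) s))"
    by (rule bilin_superset) (use keys_add[of f1 f2] in auto)
  also have "\<dots> = bilin F g f1 + bilin F g f2"
    by (subst (1 2) bilin_superset[of ?T _ ?S])
      (auto simp: lookup_add distrib_left single_add sum.distrib)
  finally show ?thesis .
qed

lemma bilin_scal_left: "bilin F (scal c f) g = scal c (bilin F f g)"
proof -
  have "bilin F (scal c f) g = (\<Sum>s\<in>Poly_Mapping.keys f. \<Sum>t\<in>Poly_Mapping.keys g.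
          Poly_Mapping.single (F s t) (Poly_Mapping.lookup (scal c f) s * Poly_Mapping.lookup g t))"
    by (rule bilin_superset) (use keys_scal_subset in auto)
  then show ?thesis by (simp add: bilin_def scal_sum scal_single lookup_scal mult.assoc)
qed

lemma bilin_scal_right: "bilin F g (scal c f) = scal c (bilin F g f)"
proof -
  have "bilin F g (scal c f) = (\<Sum>t\<in>Poly_Mapping.keys g. \<Sum>s\<in>Poly_Mapping.keys f.
          Poly_Mapping.single (F t s) (Poly_Mapping.lookup g t * Poly_Mapping.lookup (scal c f) s))"
    by (rule bilin_superset) (use keys_scal_subset in auto)
  then show ?thesis by (simp add: bilin_def scal_sum scal_single lookup_scal mult.left_commute)
qed

lemma bilin_zero_left: "bilin F 0 g = 0"
  and bilin_zero_right: "bilin F g 0 = 0"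
  by (simp_all add: bilin_def)

lemma bilin_uminus_left: "bilin F (- f) g = - bilin F f g"
  by (metis bilin_scal_left scal_minus_one)

lemma bilin_uminus_right: "bilin F g (- f) = - bilin F g f"
  by (metis bilin_scal_right scal_minus_one)

lemma bilin_diff_left: "bilin F (f1 - f2) g = bilin F f1 g - bilin F f2 g"
  by (metis bilin_add_left bilin_uminus_left diff_conv_add_uminus)

lemma bilin_diff_right: "bilin F g (f1 - f2) = bilin F g f1 - bilin F g f2"
  by (metis bilin_add_right bilin_uminus_right diff_conv_add_uminus)

lemma bilin_mon: "bilin F (mon u) (mon v) = (mon (F u v) :: ('x, 'k::field) dpterm)"
  by (simp add: bilin_def mon_def)

lemmas bilin_linear = bilin_add_left bilin_add_right bilin_scal_left bilin_scal_right
  bilin_uminus_left bilin_uminus_right bilin_diff_left bilin_diff_right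
  bilin_zero_left bilin_zero_right

lemmas prodF_linear = bilin_linear[where F = Prod, folded prodF_eq_bilin]
lemmas brkF_linear = bilin_linear[where F = Brk, folded brkF_eq_bilin]

lemma derF_superset:
  assumes "finite S" "Poly_Mapping.keys f \<subseteq> S"
  shows "derF f = (\<Sum>s\<in>S. Poly_Mapping.single (Der s) (Poly_Mapping.lookup f s))"
  unfolding derF_def by (rule sum_keys_superset[OF assms]) simp

lemma derF_zero: "derF 0 = 0"
  by (simp add: derF_def)

lemma derF_add: "derF (f1 + f2) = derF f1 + derF f2"
proof -
  let ?S = "Poly_Mapping.keys f1 \<union> Poly_Mapping.keys f2"
  have "derF (f1 + f2) = (\<Sum>s\<in>?S. Poly_Mapping.single (Der s) (Poly_Mapping.lookup (f1 + f2) s))"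
    by (rule derF_superset) (use keys_add[of f1 f2] in auto)
  also have "\<dots> = derF f1 + derF f2"
    by (subst (1 2) derF_superset[of ?S]) (auto simp: lookup_add single_add sum.distrib)
  finally show ?thesis .
qed

lemma derF_scal: "derF (scal c f) = scal c (derF f)"
proof -
  have "derF (scal c f) = (\<Sum>s\<in>Poly_Mapping.keys f.
          Poly_Mapping.single (Der s) (Poly_Mapping.lookup (scal c f) s))"
    by (rule derF_superset) (use keys_scal_subset in auto)
  then show ?thesis by (simp add: derF_def scal_sum scal_single lookup_scal)
qed

lemma derF_diff: "derF (f1 - f2) = derF f1 - derF f2"
  by (metis derF_add derF_scal diff_conv_add_uminus scal_minus_one)

lemma derF_mon: "derF (mon u) = (mon (Der u) :: ('x, 'k::field) dpterm)"
  by (simp add: derF_def mon_def)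

definition dp_cong :: "('x, 'k::field) dpterm \<Rightarrow> ('x, 'k) dpterm \<Rightarrow> bool" (infix "\<approx>" 50) where
  "f \<approx> g \<longleftrightarrow> f - g \<in> dp_ideal"

lemma dp_ideal_uminus: "i \<in> dp_ideal \<Longrightarrow> - i \<in> dp_ideal"
  using dp_ideal.smul[of i "-1"] by (simp add: scal_minus_one)

lemma dp_cong_refl: "f \<approx> f"
  by (simp add: dp_cong_def dp_ideal.zero)

lemma dp_cong_sym: "f \<approx> g \<Longrightarrow> g \<approx> f"
  unfolding dp_cong_def using dp_ideal_uminus[of "f - g"] by simp

lemma dp_cong_trans [trans]: "f \<approx> g \<Longrightarrow> g \<approx> h \<Longrightarrow> f \<approx> h"
  unfolding dp_cong_def using dp_ideal.add[of "f - g" "g - h"] by simp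

lemma dp_cong_add: "f \<approx> f' \<Longrightarrow> g \<approx> g' \<Longrightarrow> f + g \<approx> f' + g'"
  unfolding dp_cong_def using dp_ideal.add[of "f - f'" "g - g'"] by (simp add: algebra_simps)

lemma dp_cong_scal: "f \<approx> f' \<Longrightarrow> scal c f \<approx> scal c f'"
  unfolding dp_cong_def using dp_ideal.smul[of "f - f'" c] by (simp add: scal_diff)

lemma dp_cong_uminus: "f \<approx> f' \<Longrightarrow> - f \<approx> - f'"
  unfolding dp_cong_def using dp_ideal_uminus[of "f - f'"] by simp

lemma dp_cong_diff: "f \<approx> f' \<Longrightarrow> g \<approx> g' \<Longrightarrow> f - g \<approx> f' - g'"
  unfolding diff_conv_add_uminus by (intro dp_cong_add dp_cong_uminus)

lemma dp_cong_prodF: "f \<approx> f' \<Longrightarrow> g \<approx> g' \<Longrightarrow> prodF f g \<approx> prodF f' g'"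
  unfolding dp_cong_def
  using dp_ideal.add[OF dp_ideal.prodR[of "f - f'" g] dp_ideal.prodL[of "g - g'" f']]
  by (simp add: prodF_linear)

lemma dp_cong_brkF: "f \<approx> f' \<Longrightarrow> g \<approx> g' \<Longrightarrow> brkF f g \<approx> brkF f' g'"
  unfolding dp_cong_def
  using dp_ideal.add[OF dp_ideal.brkR[of "f - f'" g] dp_ideal.brkL[of "g - g'" f']]
  by (simp add: brkF_linear)

lemma dp_cong_derF: "f \<approx> f' \<Longrightarrow> derF f \<approx> derF f'"
  unfolding dp_cong_def using dp_ideal.der[of "f - f'"] by (simp add: derF_diff)

lemma prodF_commute_cong: "prodF a b \<approx> prodF b a"
  unfolding dp_cong_def by (rule dp_ideal.comm)

lemma prodF_assoc_cong: "prodF (prodF a b) c \<approx> prodF a (prodF b c)"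
  unfolding dp_cong_def by (rule dp_ideal.assoc)

lemma prodF_left_commute_cong: "prodF a (prodF b c) \<approx> prodF b (prodF a c)"
proof -
  have "prodF a (prodF b c) \<approx> prodF (prodF a b) c" by (rule dp_cong_sym[OF prodF_assoc_cong])
  also have "\<dots> \<approx> prodF (prodF b a) c" by (intro dp_cong_prodF prodF_commute_cong dp_cong_refl)
  also have "\<dots> \<approx> prodF b (prodF a c)" by (rule prodF_assoc_cong)
  finally show ?thesis .
qed

lemma brkF_anticommute_cong: "brkF a b \<approx> - brkF b a"
proof -
  have "brkF (a + b) (a + b) - brkF a a - brkF b b \<in> dp_ideal"
    using dp_ideal.add[OF dp_ideal.alt dp_ideal_uminus[OF dp_ideal.add[OF dp_ideal.alt dp_ideal.alt]]]
    by (simp add: algebra_simps)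
  then show ?thesis by (simp add: dp_cong_def brkF_linear algebra_simps)
qed

lemma brkF_prodF_right_cong: "brkF a (prodF b c) \<approx> prodF (brkF a b) c + prodF b (brkF a c)"
  unfolding dp_cong_def by (rule dp_ideal.leibniz)

lemma brkF_prodF_left_cong: "brkF (prodF b c) a \<approx> prodF (brkF b a) c + prodF b (brkF c a)"
proof -
  have "brkF (prodF b c) a \<approx> - brkF a (prodF b c)" by (rule brkF_anticommute_cong)
  also have "\<dots> \<approx> - (prodF (brkF a b) c + prodF b (brkF a c))"
    by (intro dp_cong_uminus brkF_prodF_right_cong)
  also have "\<dots> \<approx> - (prodF (- brkF b a) c + prodF b (- brkF c a))"
    by (intro dp_cong_uminus dp_cong_add dp_cong_prodF brkF_anticommute_cong dp_cong_refl)
  also have "\<dots> = prodF (brkF b a) c + prodF b (brkF c a)"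
    by (simp add: prodF_linear)
  finally show ?thesis .
qed

lemma derF_prodF_cong: "derF (prodF a b) \<approx> prodF (derF a) b + prodF a (derF b)"
  unfolding dp_cong_def by (rule dp_ideal.der_prod)

lemma mod_ideal_iff: "f \<in> mod_ideal S \<longleftrightarrow> (\<exists>s\<in>S. f \<approx> s)"
  by (force simp: mod_ideal_def dp_cong_def)

lemma subset_mod_ideal: "S \<subseteq> mod_ideal S"
  by (meson dp_cong_refl mod_ideal_iff subsetI)

lemma mod_ideal_cong: "f \<in> mod_ideal S \<Longrightarrow> f \<approx> g \<Longrightarrow> g \<in> mod_ideal S"
  by (meson dp_cong_sym dp_cong_trans mod_ideal_iff)

lemma mod_ideal_subset: "S \<subseteq> mod_ideal T \<Longrightarrow> mod_ideal S \<subseteq> mod_ideal T"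
  by (meson mod_ideal_cong mod_ideal_iff dp_cong_sym subsetD subsetI)

lemma mod_ideal_closed:
  assumes "\<And>s t. s \<in> S \<Longrightarrow> t \<in> S \<Longrightarrow> h s t \<in> S"
    and "\<And>f f' g g'. f \<approx> f' \<Longrightarrow> g \<approx> g' \<Longrightarrow> h f g \<approx> h f' g'"
    and "f \<in> mod_ideal S" "g \<in> mod_ideal S"
  shows "h f g \<in> mod_ideal S"
proof -
  obtain s t where "s \<in> S" "t \<in> S" "f \<approx> s" "g \<approx> t"
    using assms(3,4) by (auto simp: mod_ideal_iff)
  then show ?thesis using assms(1,2) unfolding mod_ideal_iff by blast
qed

definition SGD :: "('x, 'k::field) dpterm set" where
  "SGD = mod_ideal sgd"

lemma SGD_cong: "f \<in> SGD \<Longrightarrow> f \<approx> g \<Longrightarrow> g \<in> SGD"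
  unfolding SGD_def by (rule mod_ideal_cong)

lemma sgd_subset_SGD: "sgd \<subseteq> SGD"
  unfolding SGD_def by (rule subset_mod_ideal)

lemma SGD_add: "f \<in> SGD \<Longrightarrow> g \<in> SGD \<Longrightarrow> f + g \<in> SGD"
  unfolding SGD_def by (rule mod_ideal_closed) (auto intro: sgd.add dp_cong_add)

lemma SGD_scal: "f \<in> SGD \<Longrightarrow> scal c f \<in> SGD"
  unfolding SGD_def
  using mod_ideal_closed[where h = "\<lambda>f g. scal c f", of sgd f f] by (auto intro: sgd.smul dp_cong_scal)

lemma SGD_brkF: "f \<in> SGD \<Longrightarrow> g \<in> SGD \<Longrightarrow> brkF f g \<in> SGD"
  unfolding SGD_def by (rule mod_ideal_closed) (auto intro: sgd.lie dp_cong_brkF)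

lemma SGD_circ: "f \<in> SGD \<Longrightarrow> g \<in> SGD \<Longrightarrow> prodF f (derF g) \<in> SGD"
  unfolding SGD_def by (rule mod_ideal_closed) (auto intro: sgd.circ dp_cong_prodF dp_cong_derF)

section \<open>Levels\<close>

fun sgd_level :: "nat \<Rightarrow> ('x, 'k::field) dpterm \<Rightarrow> bool" where
  "sgd_level 0 f \<longleftrightarrow> f \<in> SGD"
| "sgd_level (Suc n) f \<longleftrightarrow> (\<forall>a\<in>SGD. sgd_level n (prodF f a))"

lemma sgd_level_cong: "sgd_level n f \<Longrightarrow> f \<approx> g \<Longrightarrow> sgd_level n g"
  by (induction n arbitrary: f g) (auto intro: SGD_cong dp_cong_prodF dp_cong_refl)

lemma sgd_level_add: "sgd_level n f \<Longrightarrow> sgd_level n g \<Longrightarrow> sgd_level n (f + g)"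
  by (induction n arbitrary: f g) (auto simp: SGD_add prodF_linear)

lemma sgd_level_scal: "sgd_level n f \<Longrightarrow> sgd_level n (scal c f)"
  by (induction n arbitrary: f) (auto simp: SGD_scal prodF_linear)

lemma sgd_level_diff: "sgd_level n f \<Longrightarrow> sgd_level n g \<Longrightarrow> sgd_level n (f - g)"
  using sgd_level_add[of n f "scal (-1) g"] sgd_level_scal[of n g "-1"]
  by (simp add: scal_minus_one)

lemma sgd_level_diff_cong:
  "sgd_level n f \<Longrightarrow> sgd_level n g \<Longrightarrow> f - g \<approx> h \<Longrightarrow> sgd_level n h"
  using sgd_level_cong sgd_level_diff by blast

lemma sgd_level_prodF:
  "sgd_level m f \<Longrightarrow> sgd_level n g \<Longrightarrow> 1 \<le> m + n \<Longrightarrow> sgd_level (m + n - 1) (prodF f g)"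
proof (induction n arbitrary: g)
  case 0
  then show ?case by (cases m) auto
next
  case (Suc k)
  show ?case
  proof (cases m)
    case 0
    then show ?thesis using Suc.prems by (auto intro: sgd_level_cong prodF_commute_cong)
  next
    case (Suc j)
    have "sgd_level (j + k) (prodF (prodF f g) a)" if "a \<in> SGD" for a
    proof -
      have "sgd_level (m + k - 1) (prodF f (prodF g a))"
        using Suc.IH Suc.prems \<open>a \<in> SGD\<close> Suc by simp
      then show ?thesis using Suc by (auto intro: sgd_level_cong dp_cong_sym[OF prodF_assoc_cong])
    qed
    then show ?thesis using Suc by simp
  qed
qed

text \<open>The base case is where the operation \<open>u \<circ> v = u d(v)\<close> of \<open>SGD\<langle>X\<rangle>\<close> enters.\<close>

lemma sgd_level_derF: "sgd_level n f \<Longrightarrow> sgd_level (Suc n) (derF f)"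
proof (induction n arbitrary: f)
  case 0
  then show ?case by (auto intro: SGD_cong[OF SGD_circ] prodF_commute_cong)
next
  case (Suc k)
  have "sgd_level k (prodF (prodF (derF f) a) b)" if a: "a \<in> SGD" and b: "b \<in> SGD" for a b
  proof -
    let ?P = "prodF (prodF (derF f) b) a" and ?Q = "prodF (prodF f (derF b)) a"
    have "sgd_level k (prodF (derF (prodF f b)) a)"
      using Suc.IH Suc.prems a b by simp
    moreover have "sgd_level k (prodF f (prodF a (derF b)))"
      using Suc.prems a b by (simp add: SGD_circ)
    moreover have "prodF (derF (prodF f b)) a \<approx> ?P + ?Q"
      using dp_cong_prodF[OF derF_prodF_cong dp_cong_refl, of f b a] by (simp add: prodF_linear)
    moreover have "prodF f (prodF a (derF b)) \<approx> ?Q"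
    proof -
      have "prodF f (prodF a (derF b)) \<approx> prodF f (prodF (derF b) a)"
        by (intro dp_cong_prodF dp_cong_refl prodF_commute_cong)
      also have "\<dots> \<approx> ?Q" by (rule dp_cong_sym[OF prodF_assoc_cong])
      finally show ?thesis .
    qed
    ultimately have "sgd_level k (?P + ?Q - ?Q)"
      by (blast intro: sgd_level_diff_cong dp_cong_diff)
    moreover have "?P \<approx> prodF (prodF (derF f) a) b"
    proof -
      have "?P \<approx> prodF (derF f) (prodF b a)" by (rule prodF_assoc_cong)
      also have "\<dots> \<approx> prodF (derF f) (prodF a b)" by (intro dp_cong_prodF dp_cong_refl prodF_commute_cong)
      also have "\<dots> \<approx> prodF (prodF (derF f) a) b" by (rule dp_cong_sym[OF prodF_assoc_cong])
      finally show ?thesis .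
    qed
    ultimately show ?thesis by (auto intro: sgd_level_cong)
  qed
  then show ?case by simp
qed

lemma sgd_level_brkF_SGD_right: "sgd_level n f \<Longrightarrow> b \<in> SGD \<Longrightarrow> sgd_level n (brkF f b)"
proof (induction n arbitrary: f)
  case 0
  then show ?case by (simp add: SGD_brkF)
next
  case (Suc k)
  have "sgd_level k (prodF (brkF f b) a)" if a: "a \<in> SGD" for a
  proof (rule sgd_level_diff_cong)
    show "sgd_level k (brkF (prodF f a) b)" using Suc a by simp
    show "sgd_level k (prodF f (brkF a b))" using Suc a by (simp add: SGD_brkF)
    show "brkF (prodF f a) b - prodF f (brkF a b) \<approx> prodF (brkF f b) a"
      using dp_cong_diff[OF brkF_prodF_left_cong dp_cong_refl, of f a b "prodF f (brkF a b)"] by simp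
  qed
  then show ?case by simp
qed

lemma sgd_level_brkF_SGD_left: "f \<in> SGD \<Longrightarrow> sgd_level n g \<Longrightarrow> sgd_level n (brkF f g)"
  using sgd_level_scal[OF sgd_level_brkF_SGD_right[of n g f], of "-1"]
    dp_cong_sym[OF brkF_anticommute_cong[of f g]]
  by (auto simp: scal_minus_one intro: sgd_level_cong)

lemma sgd_level_brkF: "sgd_level m f \<Longrightarrow> sgd_level n g \<Longrightarrow> sgd_level (m + n) (brkF f g)"
proof (induction m arbitrary: f)
  case 0
  then show ?case by (simp add: sgd_level_brkF_SGD_left)
next
  case (Suc k)
  have "sgd_level (k + n) (prodF (brkF f g) a)" if a: "a \<in> SGD" for a
  proof (rule sgd_level_diff_cong)
    show "sgd_level (k + n) (brkF (prodF f a) g)" using Suc a by simp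
    have "sgd_level n (brkF a g)" using Suc a by (simp add: sgd_level_brkF_SGD_left)
    then show "sgd_level (k + n) (prodF f (brkF a g))"
      using sgd_level_prodF[OF Suc.prems(1)] by fastforce
    show "brkF (prodF f a) g - prodF f (brkF a g) \<approx> prodF (brkF f g) a"
      using dp_cong_diff[OF brkF_prodF_left_cong dp_cong_refl, of f a g "prodF f (brkF a g)"] by simp
  qed
  then show ?case by simp
qed

section \<open>Weights\<close>

text \<open>Weights are shifted by one against \<open>wt\<close>; unlike levels, they may be negative.\<close>

inductive weighted :: "int \<Rightarrow> ('x, 'k::field) dpterm \<Rightarrow> bool" where
  level: "sgd_level n f \<Longrightarrow> weighted (int n) f"
| prodF: "weighted i f \<Longrightarrow> weighted j g \<Longrightarrow> weighted (i + j - 1) (prodF f g)"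
| add: "weighted i f \<Longrightarrow> weighted i g \<Longrightarrow> weighted i (f + g)"
| scal: "weighted i f \<Longrightarrow> weighted i (scal c f)"
| cong: "weighted i f \<Longrightarrow> f \<approx> g \<Longrightarrow> weighted i g"

lemma weighted_prodF_level:
  "weighted i f \<Longrightarrow> sgd_level n g \<Longrightarrow> 1 \<le> i + int n \<Longrightarrow> sgd_level (nat (i + int n - 1)) (prodF f g)"
proof (induction arbitrary: n g rule: weighted.induct)
  case (level m f)
  moreover have "nat (int m + int n - 1) = m + n - 1" by simp
  ultimately show ?case using sgd_level_prodF[of m f n g] by simp
next
  case (prodF i1 f1 i2 f2)
  show ?case
  proof (cases "1 \<le> i2 + int n")
    case True
    then have "sgd_level (nat (i2 + int n - 1)) (prodF f2 g)"
      using prodF.IH(2) prodF.prems(1) by blast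
    then have "sgd_level (nat (i1 + i2 - 1 + int n - 1)) (prodF f1 (prodF f2 g))"
      using prodF.IH(1)[of "nat (i2 + int n - 1)"] True prodF.prems(2) by simp
    then show ?thesis by (rule sgd_level_cong[OF _ dp_cong_sym[OF prodF_assoc_cong]])
  next
    case False
    then have "sgd_level (nat (i1 + int n - 1)) (prodF f1 g)"
      using prodF.IH(1) prodF.prems by simp
    then have "sgd_level (nat (i1 + i2 - 1 + int n - 1)) (prodF f2 (prodF f1 g))"
      using prodF.IH(2)[of "nat (i1 + int n - 1)"] False prodF.prems(2) by (simp add: algebra_simps)
    moreover have "prodF f2 (prodF f1 g) \<approx> prodF (prodF f1 f2) g"
      using dp_cong_trans[OF prodF_left_commute_cong dp_cong_sym[OF prodF_assoc_cong]] .
    ultimately show ?thesis by (rule sgd_level_cong)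
  qed
next
  case (add i f h)
  then show ?case by (auto simp: prodF_linear intro: sgd_level_add)
next
  case (scal i f c)
  then show ?case by (auto simp: prodF_linear intro: sgd_level_scal)
next
  case (cong i f h)
  then show ?case by (auto intro: sgd_level_cong dp_cong_prodF dp_cong_refl)
qed

lemma weighted_level: "weighted i f \<Longrightarrow> 0 \<le> i \<Longrightarrow> sgd_level (nat i) f"
proof (induction rule: weighted.induct)
  case (level n f)
  then show ?case by simp
next
  case (prodF i1 f1 i2 f2)
  show ?case
  proof (cases "0 \<le> i1")
    case True
    then have "sgd_level (nat (i2 + i1 - 1)) (prodF f2 f1)"
      using weighted_prodF_level[OF prodF.hyps(2) prodF.IH(1)] prodF.prems by simp
    then show ?thesis by (auto intro: sgd_level_cong prodF_commute_cong simp: add.commute)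
  next
    case False
    then show ?thesis
      using weighted_prodF_level[OF prodF.hyps(1) prodF.IH(2)] prodF.prems by simp
  qed
next
  case (add i f g)
  then show ?case by (auto intro: sgd_level_add)
next
  case (scal i f c)
  then show ?case by (auto intro: sgd_level_scal)
next
  case (cong i f g)
  then show ?case by (auto intro: sgd_level_cong)
qed

lemma weighted_derF: "weighted i f \<Longrightarrow> weighted (i + 1) (derF f)"
proof (induction rule: weighted.induct)
  case (level n f)
  then show ?case using weighted.level[OF sgd_level_derF[OF level]] by (simp add: add.commute)
next
  case (prodF i f j g)
  have "weighted (i + j) (prodF (derF f) g)"
    using weighted.prodF[OF prodF.IH(1) prodF.hyps(2)] by simp
  moreover have "weighted (i + j) (prodF f (derF g))"
    using weighted.prodF[OF prodF.hyps(1) prodF.IH(2)] by simp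
  ultimately have "weighted (i + j) (prodF (derF f) g + prodF f (derF g))"
    by (rule weighted.add)
  then show ?case by (auto intro: weighted.cong dp_cong_sym[OF derF_prodF_cong])
next
  case (add i f g)
  then show ?case by (simp add: derF_add weighted.add)
next
  case (scal i f c)
  then show ?case by (simp add: derF_scal weighted.scal)
next
  case (cong i f g)
  then show ?case by (auto intro: weighted.cong dp_cong_derF)
qed

lemma weighted_brkF_level: "weighted j g \<Longrightarrow> sgd_level m f \<Longrightarrow> weighted (int m + j) (brkF f g)"
proof (induction rule: weighted.induct)
  case (level n g)
  then show ?case using weighted.level[OF sgd_level_brkF[of m f n g]] by simp
next
  case (prodF j1 g1 j2 g2)
  have "weighted (int m + j1 + j2 - 1) (prodF (brkF f g1) g2)"
    using weighted.prodF[OF prodF.IH(1)[OF prodF.prems] prodF.hyps(2)] .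
  moreover have "weighted (int m + j1 + j2 - 1) (prodF g1 (brkF f g2))"
    using weighted.prodF[OF prodF.hyps(1) prodF.IH(2)[OF prodF.prems]] by (simp add: algebra_simps)
  ultimately have "weighted (int m + (j1 + j2 - 1)) (prodF (brkF f g1) g2 + prodF g1 (brkF f g2))"
    by (simp add: algebra_simps weighted.add)
  then show ?case by (auto intro: weighted.cong dp_cong_sym[OF brkF_prodF_right_cong])
next
  case (add i g h)
  then show ?case by (simp add: brkF_linear weighted.add)
next
  case (scal i g c)
  then show ?case by (simp add: brkF_linear weighted.scal)
next
  case (cong i g h)
  then show ?case by (auto intro: weighted.cong dp_cong_brkF dp_cong_refl)
qed

lemma weighted_brkF: "weighted i f \<Longrightarrow> weighted j g \<Longrightarrow> weighted (i + j) (brkF f g)"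
proof (induction rule: weighted.induct)
  case (level n f)
  then show ?case using weighted_brkF_level by blast
next
  case (prodF i1 f1 i2 f2)
  have "weighted (i1 + i2 - 1 + j) (prodF (brkF f1 g) f2)"
    using weighted.prodF[OF prodF.IH(1)[OF prodF.prems] prodF.hyps(2)] by (simp add: algebra_simps)
  moreover have "weighted (i1 + i2 - 1 + j) (prodF f1 (brkF f2 g))"
    using weighted.prodF[OF prodF.hyps(1) prodF.IH(2)[OF prodF.prems]] by (simp add: algebra_simps)
  ultimately have "weighted (i1 + i2 - 1 + j) (prodF (brkF f1 g) f2 + prodF f1 (brkF f2 g))"
    by (rule weighted.add)
  then show ?case by (auto intro: weighted.cong dp_cong_sym[OF brkF_prodF_left_cong])
next
  case (add i f h)
  then show ?case by (simp add: brkF_linear weighted.add)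
next
  case (scal i f c)
  then show ?case by (simp add: brkF_linear weighted.scal)
next
  case (cong i f h)
  then show ?case by (auto intro: weighted.cong dp_cong_brkF dp_cong_refl)
qed

lemma weighted_mon: "weighted (wt u + 1) (mon u :: ('x, 'k::field) dpterm)"
proof (induction u)
  case (Gen x)
  have "sgd_level 0 (mon (Gen x) :: ('x, 'k) dpterm)"
    using subsetD[OF sgd_subset_SGD sgd.gen] by simp
  then show ?case using weighted.level[of 0] by simp
next
  case (Der u)
  then show ?case using weighted_derF[OF Der] by (simp add: derF_mon)
next
  case (Prod u v)
  then show ?case using weighted.prodF[OF Prod.IH]
    by (simp add: prodF_eq_bilin bilin_mon algebra_simps)
next
  case (Brk u v)
  then show ?case using weighted_brkF[OF Brk.IH]
    by (simp add: brkF_eq_bilin bilin_mon algebra_simps)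
qed

lemma mon_in_SGD: "wt u = -1 \<Longrightarrow> (mon u :: ('x, 'k::field) dpterm) \<in> SGD"
  using weighted_level[OF weighted_mon[of u]] by simp

lemma bilin_lspan:
  assumes "f \<in> lspan A" "g \<in> lspan B"
    and "\<And>a b. a \<in> A \<Longrightarrow> b \<in> B \<Longrightarrow> bilin F a b \<in> lspan C"
  shows "bilin F f g \<in> lspan C"
  using assms(1)
proof (induction rule: lspan.induct)
  case (base a)
  from assms(2) show ?case
    by (induction rule: lspan.induct)
      (auto simp: bilin_linear intro: assms(3)[OF base] lspan.zero lspan.add lspan.smul)
qed (auto simp: bilin_linear intro: lspan.zero lspan.add lspan.smul)

lemma derF_lspan:
  assumes "f \<in> lspan A" "\<And>a. a \<in> A \<Longrightarrow> derF a \<in> lspan C"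
  shows "derF f \<in> lspan C"
  using assms(1)
  by (induction rule: lspan.induct)
    (auto simp: derF_add derF_scal derF_zero intro: assms(2) lspan.zero lspan.add lspan.smul)

lemma sgd_subset_lspan_wt:
  "(sgd :: ('x, 'k::field) dpterm set) \<subseteq> lspan {mon u | u :: 'x dpmon. wt u = -1}"
proof
  fix f :: "('x, 'k) dpterm"
  assume "f \<in> sgd"
  then show "f \<in> lspan {mon u | u. wt u = -1}"
  proof (induction rule: sgd.induct)
    case (gen x)
    then show ?case by (intro lspan.base) auto
  next
    case (lie f g)
    show ?case unfolding brkF_eq_bilin
      by (rule bilin_lspan[OF lie.IH]) (auto intro!: lspan.base simp: bilin_mon)
  next
    case (circ f g)
    have "derF g \<in> lspan {mon u | u :: 'x dpmon. wt u = 0}"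
      by (rule derF_lspan[OF circ.IH(2)]) (auto simp: derF_mon intro!: lspan.base)
    then show ?case unfolding prodF_eq_bilin
      by (rule bilin_lspan[OF circ.IH(1)]) (auto intro!: lspan.base simp: bilin_mon)
  qed (auto intro: lspan.zero lspan.add lspan.smul)
qed

lemma lspan_wt_subset_SGD:
  "lspan {mon u | u :: 'x dpmon. wt u = -1} \<subseteq> (SGD :: ('x, 'k::field) dpterm set)"
proof
  fix f :: "('x, 'k) dpterm"
  assume "f \<in> lspan {mon u | u. wt u = -1}"
  then show "f \<in> SGD"
    by (induction rule: lspan.induct)
      (auto intro: mon_in_SGD SGD_add SGD_scal subsetD[OF sgd_subset_SGD sgd.zero])
qed

theorem mainTheorem16:
  shows "mod_ideal (sgd :: ('x, 'k::field) dpterm set)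
         = mod_ideal (lspan {mon u | u :: 'x dpmon. wt u = -1})"
proof (rule antisym; rule mod_ideal_subset)
  show "sgd \<subseteq> mod_ideal (lspan {mon u | u :: 'x dpmon. wt u = -1})"
    using sgd_subset_lspan_wt subset_mod_ideal by blast
  show "lspan {mon u | u :: 'x dpmon. wt u = -1} \<subseteq> mod_ideal (sgd :: ('x, 'k) dpterm set)"
    using lspan_wt_subset_SGD by (simp add: SGD_def)
qed

end
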